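(* Let ${\bf f}=(f_1,\dots,f_n)$ be a complete intersection (of $n$ quadrics in $n$ variables) with $k\le 2^n$ real points. Then (a) $\mathcal{R}^{lin}_{\bf f}$ consists of $k$ spectrahedral cones, each linearly isomorphic to the master spectrahedron $\mathrm{S}^{lin}_{\bf f}$; and (b) $\mathcal{R}^{ed}_{\bf f}$ consists of $k$ full-dimensional spectrahedra, each (affinely) isomorphic to the master spectrahedron $\mathrm{S}^{ed}_{\bf f}$.
   Context: Write $f_i(x)=x^TA_ix+2a_i^Tx+\alpha_i$ with $A_i$ real symmetric $n\times n$, $a_i\in\mathbb{R}^n$, $\alpha_i\in\mathbb{R}$; $V_{\bf f}\subset\mathbb{R}^n$ is the real zero set. Master spectrahedra: $\mathrm{S}^{lin}_{\bf f}=\{\lambda\in\mathbb{R}^n:\sum_i\lambda_iA_i\prec0\}$, $\mathrm{S}^{ed}_{\bf f}=\{\lambda\in\mathbb{R}^n:\sum_i\lambda_iA_i\prec I_n\}$. SDP-exact regions: $\mathcal{R}^{lin}_{\bf f}$ is the set of $u\in\mathbb{R}^n$ such that there exist $x\in V_{\bf f}$ and $\lambda\in\mathrm{S}^{lin}_{\bf f}$ with $u=\sum_i\lambda_i(a_i+A_ix)$; $\mathcal{R}^{ed}_{\bf f}$ is the set of $u\in\mathbb{R}^n$ such that there exist $x\in V_{\bf f}$ and $\lambda\in\mathrm{S}^{ed}_{\bf f}$ with $u=x-\sum_i\lambda_i(a_i+A_ix)$. (These are the SDP-exact regions, i.e. cost parameters for which the Shor relaxation of minimizing $u^Tx$, resp.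 $\|x-u\|^2$, over $V_{\bf f}$ is exact with strict complementarity.) *)

theory Defs
  imports "HOL-Analysis.Analysis"
begin

text \<open>Quadrics f_i(x) = x^T A_i x + 2 a_i^T x + alpha_i on R^n, n = CARD('n);
  the constraints are indexed by the same finite type 'n (n quadrics in n variables).\<close>

definition quad :: "real^'n^'n \<Rightarrow> real^'n \<Rightarrow> real \<Rightarrow> real^'n \<Rightarrow> real" where
  "quad A a \<alpha> x = x \<bullet> (A *v x) + 2 * (a \<bullet> x) + \<alpha>"

definition realV :: "('i \<Rightarrow> real^'n^'n) \<Rightarrow> ('i \<Rightarrow> real^'n) \<Rightarrow> ('i \<Rightarrow> real) \<Rightarrow> (real^'n) set" where
  "realV A a \<alpha> = {x. \<forall>i. quad (A i) (a i) (\<alpha> i) x = 0}"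

definition quadC :: "real^'n^'n \<Rightarrow> real^'n \<Rightarrow> real \<Rightarrow> complex^'n \<Rightarrow> complex" where
  "quadC A a \<alpha> z = (\<Sum>j\<in>UNIV. \<Sum>k\<in>UNIV. complex_of_real (A$j$k) * z$j * z$k)
      + 2 * (\<Sum>j\<in>UNIV. complex_of_real (a$j) * z$j) + complex_of_real \<alpha>"

definition complexV :: "('n \<Rightarrow> real^'n^'n) \<Rightarrow> ('n \<Rightarrow> real^'n) \<Rightarrow> ('n \<Rightarrow> real) \<Rightarrow> (complex^'n) set" where
  "complexV A a \<alpha> = {z. \<forall>i. quadC (A i) (a i) (\<alpha> i) z = 0}"

text \<open>Half of the Jacobian of f at a complex point: row i is (A_i z + a_i)^T.\<close>
definition jacC :: "('n \<Rightarrow> real^'n^'n) \<Rightarrow> ('n \<Rightarrow> real^'n) \<Rightarrow> complex^'n \<Rightarrow> complex^'n^'n" where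
  "jacC A a z = (\<chi> i j. (\<Sum>k\<in>UNIV. complex_of_real (A i $j$k) * z$k) + complex_of_real (a i $ j))"

text \<open>Complete intersection: the ideal (f_1,..,f_n) is radical of codimension n, i.e.
  the complex variety is zero-dimensional (finite) and reduced (the Jacobian is
  nonsingular at every complex zero).\<close>
definition complete_intersection :: "('n \<Rightarrow> real^'n^'n) \<Rightarrow> ('n \<Rightarrow> real^'n) \<Rightarrow> ('n \<Rightarrow> real) \<Rightarrow> bool" where
  "complete_intersection A a \<alpha> \<longleftrightarrow>
     finite (complexV A a \<alpha>) \<and> (\<forall>z\<in>complexV A a \<alpha>. det (jacC A a z) \<noteq> 0)"

definition neg_definite :: "real^'n^'n \<Rightarrow> bool" where
  "neg_definite M \<longleftrightarrow> (\<forall>v. v \<noteq> 0 \<longrightarrow> v \<bullet> (M *v v) < 0)"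

definition lin_comb :: "real^'i \<Rightarrow> ('i \<Rightarrow> real^'n^'n) \<Rightarrow> real^'n^'n" where
  "lin_comb lam A = (\<Sum>i\<in>UNIV. lam$i *\<^sub>R A i)"

definition Slin :: "('n \<Rightarrow> real^'n^'n) \<Rightarrow> (real^'n) set" where
  "Slin A = {lam. neg_definite (lin_comb lam A)}"

definition Sed :: "('n \<Rightarrow> real^'n^'n) \<Rightarrow> (real^'n) set" where
  "Sed A = {lam. neg_definite (lin_comb lam A - mat 1)}"

definition Rlin :: "('n \<Rightarrow> real^'n^'n) \<Rightarrow> ('n \<Rightarrow> real^'n) \<Rightarrow> ('n \<Rightarrow> real) \<Rightarrow> (real^'n) set" where
  "Rlin A a \<alpha> = {u. \<exists>x\<in>realV A a \<alpha>. \<exists>lam\<in>Slin A.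
      u = (\<Sum>i\<in>UNIV. lam$i *\<^sub>R (a i + A i *v x))}"

definition Red :: "('n \<Rightarrow> real^'n^'n) \<Rightarrow> ('n \<Rightarrow> real^'n) \<Rightarrow> ('n \<Rightarrow> real) \<Rightarrow> (real^'n) set" where
  "Red A a \<alpha> = {u. \<exists>x\<in>realV A a \<alpha>. \<exists>lam\<in>Sed A.
      u = x - (\<Sum>i\<in>UNIV. lam$i *\<^sub>R (a i + A i *v x))}"

definition spectrahedral_cone :: "(real^'n) set \<Rightarrow> bool" where
  "spectrahedral_cone C \<longleftrightarrow> (\<exists>(m::nat) (B :: 'n \<Rightarrow> nat \<Rightarrow> nat \<Rightarrow> real).
     (\<forall>j r s. B j r s = B j s r) \<and>
     C = {u. \<forall>v::nat \<Rightarrow> real. (\<exists>r<m. v r \<noteq> 0) \<longrightarrow>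
            (\<Sum>r<m. \<Sum>s<m. v r * (\<Sum>j\<in>UNIV. u$j * B j r s) * v s) < 0})"

definition spectrahedron :: "(real^'n) set \<Rightarrow> bool" where
  "spectrahedron S \<longleftrightarrow> (\<exists>(m::nat) (B0 :: nat \<Rightarrow> nat \<Rightarrow> real) (B :: 'n \<Rightarrow> nat \<Rightarrow> nat \<Rightarrow> real).
     (\<forall>r s. B0 r s = B0 s r) \<and> (\<forall>j r s. B j r s = B j s r) \<and>
     S = {u. \<forall>v::nat \<Rightarrow> real. (\<exists>r<m. v r \<noteq> 0) \<longrightarrow>
            (\<Sum>r<m. \<Sum>s<m. v r * (B0 r s + (\<Sum>j\<in>UNIV. u$j * B j r s)) * v s) > 0})"

end

theory Submission
  imports Defs
begin

text \<open>For a real zero x of the quadrics let g x \<lambda> = grad_comb A a x \<lambda> = \<Sum>i. \<lambda>_i (a_i + A_i x),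
  half the gradient of \<Sum>i. \<lambda>_i f_i at x. It is the transposed Jacobian at x applied to \<lambda>, hence
  a linear bijection: the Jacobian is nonsingular at every complex, a fortiori every real, zero.
  For a second zero z, expanding \<Sum>i. \<lambda>_i (f_i z - f_i x) = 0 gives
  (z - x)\<bullet>(A(\<lambda>) (z - x)) + 2 g x \<lambda> \<bullet> (z - x) = 0, where A(\<lambda>) = \<Sum>i. \<lambda>_i A_i.
  So for \<lambda> in Slin the point x is the unique minimiser over V of the linear form u = g x \<lambda>,
  and for \<lambda> in Sed it is the unique point of V nearest to u = x - g x \<lambda>: in both cases u
  determines x. Both regions are therefore disjoint unions, over the real zeros x, of images of
  the master spectrahedra under the invertible linear map g x, resp. the affine map x - g x,
  and spectrahedra are preserved by invertible affine maps.\<close>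

lemma disjoint_family_on_strict_optimum:
  fixes \<phi> :: "'a \<Rightarrow> 'b \<Rightarrow> 'c::order"
  assumes "\<And>x y u. x \<in> V \<Longrightarrow> y \<in> V \<Longrightarrow> x \<noteq> y \<Longrightarrow> u \<in> F x \<Longrightarrow> \<phi> u x < \<phi> u y"
  shows "disjoint_family_on F V"
  using assms unfolding disjoint_family_on_def disjoint_iff by (metis less_asym)

lemma interior_injective_affine_image:
  fixes M :: "'a::euclidean_space \<Rightarrow> 'a"
  assumes "linear M" "inj M"
  shows "interior ((\<lambda>w. M w + c) ` S) = (\<lambda>w. M w + c) ` interior S"
proof -
  have "(\<lambda>w. M w + c) ` T = (+) c ` M ` T" for T
    by (simp add: image_image add.commute)
  then show ?thesis
    by (simp add: interior_translation interior_injective_linear_image[OF assms])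
qed

lemma det_of_real: "det (\<chi> i j. complex_of_real (M$i$j)) = complex_of_real (det (M::real^'n^'n))"
  by (simp add: det_def of_real_sum of_real_mult of_real_prod)

lemma lin_comb_component: "lin_comb lam A $ p $ q = (\<Sum>i\<in>UNIV. lam$i * A i $ p $ q)"
  by (simp add: lin_comb_def sum_component)

lemma lin_comb_mult_vec: "lin_comb lam A *v v = (\<Sum>i\<in>UNIV. lam$i *\<^sub>R (A i *v v))"
  by (simp add: vec_eq_iff lin_comb_component matrix_vector_mult_def sum_component
      sum_distrib_left sum_distrib_right mult.assoc)
    (intro allI sum.swap)

lemma symmetric_component: "transpose M = M \<Longrightarrow> M $ p $ q = M $ q $ p"
  by (metis transpose_def vec_lambda_beta)

lemma quadratic_form_expand: "x \<bullet> (P *v x) = (\<Sum>p\<in>UNIV. \<Sum>q\<in>UNIV. x$p * P$p$q * x$q)"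
  by (simp add: inner_vec_def matrix_vector_mult_def sum_distrib_left mult.assoc)

lemma quadratic_form_reindex:
  fixes P :: "real^'n^'n"
  assumes h: "bij_betw h {..<m} (UNIV::'n set)"
  shows "(\<Sum>r<m. \<Sum>s<m. v r * P$h r$h s * v s) =
    (\<chi> i. v (inv_into {..<m} h i)) \<bullet> (P *v (\<chi> i. v (inv_into {..<m} h i)))"
    (is "_ = ?w \<bullet> (P *v ?w)")
proof -
  have h_inv: "inv_into {..<m} h (h r) = r" if "r < m" for r
    using bij_betw_inv_into_left[OF h] that by simp
  have "?w \<bullet> (P *v ?w) = (\<Sum>r<m. \<Sum>s<m. ?w$h r * P$h r$h s * ?w$h s)"
    unfolding quadratic_form_expand
    by (simp add: sum.reindex_bij_betw[OF h, symmetric])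
  also have "\<dots> = (\<Sum>r<m. \<Sum>s<m. v r * P$h r$h s * v s)"
    by (intro sum.cong refl) (simp add: h_inv)
  finally show ?thesis ..
qed

lemma definite_iff_reindexed:
  fixes P :: "real^'n^'n" and h :: "nat \<Rightarrow> 'n"
  assumes h: "bij_betw h {..<m} (UNIV::'n set)"
  shows "(\<forall>x. x \<noteq> 0 \<longrightarrow> R (x \<bullet> (P *v x))) \<longleftrightarrow>
         (\<forall>v. (\<exists>r<m. v r \<noteq> 0) \<longrightarrow> R (\<Sum>r<m. \<Sum>s<m. v r * P$h r$h s * v s))"
proof -
  define w :: "(nat \<Rightarrow> real) \<Rightarrow> real^'n" where "w v = (\<chi> i. v (inv_into {..<m} h i))" for v
  have h_inv: "inv_into {..<m} h (h r) = r" if "r < m" for r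
    using bij_betw_inv_into_left[OF h] that by simp
  have inv_less: "inv_into {..<m} h i < m" for i
    using h by (metis bij_betw_def inv_into_into UNIV_I lessThan_iff)
  have nonzero: "w v \<noteq> 0 \<longleftrightarrow> (\<exists>r<m. v r \<noteq> 0)" for v
  proof
    assume "w v \<noteq> 0"
    then show "\<exists>r<m. v r \<noteq> 0"
      using inv_less by (auto simp: w_def vec_eq_iff)
  next
    assume "\<exists>r<m. v r \<noteq> 0"
    then show "w v \<noteq> 0"
      by (metis h_inv vec_lambda_beta w_def zero_index)
  qed
  have onto: "w (\<lambda>r. x $ h r) = x" for x
    using h by (simp add: w_def vec_eq_iff bij_betw_inv_into_right)
  show ?thesis
    unfolding quadratic_form_reindex[OF h] w_def[symmetric] nonzero[symmetric]
    by (metis onto)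
qed

lemma sum_matrix_vector_mult_coeffs:
  fixes N :: "real^'m^'n" and b :: "'n \<Rightarrow> real"
  shows "(\<Sum>j\<in>UNIV. (N *v u)$j * b j) = (\<Sum>k\<in>UNIV. u$k * (\<Sum>j\<in>UNIV. N$j$k * b j))"
  by (simp add: matrix_vector_mult_def sum_distrib_left sum_distrib_right mult_ac) (rule sum.swap)

lemma linear_inv_matrix:
  fixes L :: "real^'n \<Rightarrow> real^'n"
  assumes "linear L" "bij L"
  shows "inv L u = matrix (inv L) *v u"
  using assms by (simp add: bij_is_inj inj_linear_imp_inv_linear matrix_works)

lemma spectrahedral_cone_linear_image:
  fixes L :: "real^'n \<Rightarrow> real^'n"
  assumes "linear L" "bij L" "spectrahedral_cone C"
  shows "spectrahedral_cone (L ` C)"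
proof -
  obtain m :: nat and B where B: "\<forall>j r s. B j r s = B j s r"
    and C: "C = {u. \<forall>v. (\<exists>r<m. v r \<noteq> 0) \<longrightarrow>
      (\<Sum>r<m. \<Sum>s<m. v r * (\<Sum>j\<in>UNIV. u$j * B j r s) * v s) < 0}"
    using assms(3) unfolding spectrahedral_cone_def by (elim exE conjE) (rule that; assumption)
  define N where "N = matrix (inv L)"
  define B' where "B' k r s = (\<Sum>j\<in>UNIV. N $ j $ k * B j r s)" for k r s
  have image: "L ` C = {u. N *v u \<in> C}"
    unfolding N_def linear_inv_matrix[OF assms(1,2), symmetric]
    using assms(2) by (simp add: bij_image_Collect_eq C)
  have "L ` C = {u. \<forall>v. (\<exists>r<m. v r \<noteq> 0) \<longrightarrow>
      (\<Sum>r<m. \<Sum>s<m. v r * (\<Sum>k\<in>UNIV. u$k * B' k r s) * v s) < 0}"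
    unfolding image unfolding C mem_Collect_eq sum_matrix_vector_mult_coeffs B'_def ..
  moreover have "B' k r s = B' k s r" for k r s
    unfolding B'_def by (rule sum.cong[OF refl]) (simp only: B[rule_format, of _ r s])
  ultimately show ?thesis
    unfolding spectrahedral_cone_def by blast
qed

lemma spectrahedron_affine_image:
  fixes M :: "real^'n \<Rightarrow> real^'n"
  assumes "linear M" "bij M" "spectrahedron S"
  shows "spectrahedron ((\<lambda>w. M w + c) ` S)"
proof -
  obtain m :: nat and B0 B where B0: "\<forall>r s. B0 r s = B0 s r" and B: "\<forall>j r s. B j r s = B j s r"
    and S: "S = {u. \<forall>v. (\<exists>r<m. v r \<noteq> 0) \<longrightarrow>
      (\<Sum>r<m. \<Sum>s<m. v r * (B0 r s + (\<Sum>j\<in>UNIV. u$j * B j r s)) * v s) > 0}"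
    using assms(3) unfolding spectrahedron_def by (elim exE conjE) (rule that; assumption)
  define N where "N = matrix (inv M)"
  define B0' where "B0' r s = B0 r s - (\<Sum>j\<in>UNIV. (N *v c) $ j * B j r s)" for r s
  define B' where "B' k r s = (\<Sum>j\<in>UNIV. N $ j $ k * B j r s)" for k r s
  have image: "(\<lambda>w. M w + c) ` S = {u. N *v (u - c) \<in> S}"
    unfolding N_def linear_inv_matrix[OF assms(1,2), symmetric]
  proof safe
    fix w assume "w \<in> S"
    then show "inv M (M w + c - c) \<in> S"
      using assms(2) by (simp add: bij_is_inj)
  next
    fix u assume "inv M (u - c) \<in> S"
    moreover have "u = M (inv M (u - c)) + c"
      using assms(2) by (simp add: bij_is_surj surj_f_inv_f)
    ultimately show "u \<in> (\<lambda>w. M w + c) ` S" by blast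
  qed
  have entries: "B0 r s + (\<Sum>j\<in>UNIV. (N *v (u - c))$j * B j r s) =
      B0' r s + (\<Sum>k\<in>UNIV. u$k * B' k r s)" for u r s
    by (simp add: B0'_def B'_def matrix_vector_mult_diff_distrib left_diff_distrib sum_subtractf
        sum_matrix_vector_mult_coeffs)
  have "(\<lambda>w. M w + c) ` S = {u. \<forall>v. (\<exists>r<m. v r \<noteq> 0) \<longrightarrow>
      (\<Sum>r<m. \<Sum>s<m. v r * (B0' r s + (\<Sum>k\<in>UNIV. u$k * B' k r s)) * v s) > 0}"
    unfolding image unfolding S mem_Collect_eq entries ..
  moreover have "B0' r s = B0' s r" "B' k r s = B' k s r" for k r s
    unfolding B0'_def B'_def
    by (simp_all only: B0[rule_format, of r s] B[rule_format, of _ r s])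
  ultimately show ?thesis
    unfolding spectrahedron_def by blast
qed

lemma spectrahedral_cone_Slin:
  fixes A :: "'n::finite \<Rightarrow> real^'n^'n"
  assumes sym: "\<forall>i. transpose (A i) = A i"
  shows "spectrahedral_cone (Slin A)"
proof -
  obtain h :: "nat \<Rightarrow> 'n" where h: "bij_betw h {..<CARD('n)} UNIV"
    using ex_bij_betw_nat_finite[of "UNIV::'n set"] by (auto simp: atLeast0LessThan)
  define B where "B j r s = A j $ h r $ h s" for j r s
  have "Slin A = {u. \<forall>v. (\<exists>r<CARD('n). v r \<noteq> 0) \<longrightarrow>
      (\<Sum>r<CARD('n). \<Sum>s<CARD('n). v r * (\<Sum>j\<in>UNIV. u$j * B j r s) * v s) < 0}"
    unfolding Slin_def neg_definite_def definite_iff_reindexed[OF h, where R = "\<lambda>t. t < 0"]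
      B_def lin_comb_component ..
  moreover have "\<forall>j r s. B j r s = B j s r"
    using sym by (simp add: B_def symmetric_component)
  ultimately show ?thesis
    unfolding spectrahedral_cone_def by blast
qed

lemma spectrahedron_Sed:
  fixes A :: "'n::finite \<Rightarrow> real^'n^'n"
  assumes sym: "\<forall>i. transpose (A i) = A i"
  shows "spectrahedron (Sed A)"
proof -
  obtain h :: "nat \<Rightarrow> 'n" where h: "bij_betw h {..<CARD('n)} UNIV"
    using ex_bij_betw_nat_finite[of "UNIV::'n set"] by (auto simp: atLeast0LessThan)
  define B0 where "B0 r s = (mat 1 :: real^'n^'n) $ h r $ h s" for r s
  define B where "B j r s = - A j $ h r $ h s" for j r s
  have entries: "B0 r s + (\<Sum>j\<in>UNIV. u$j * B j r s) = - (lin_comb u A - mat 1) $ h r $ h s"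
    for u r s
    by (simp add: B0_def B_def lin_comb_component sum_negf)
  have flip: "(\<Sum>r<m. \<Sum>s<m. v r * - P r s * v s) = - (\<Sum>r<m. \<Sum>s<m. v r * P r s * v s)"
    for m v and P :: "nat \<Rightarrow> nat \<Rightarrow> real"
    by (simp add: sum_negf)
  have "Sed A = {u. \<forall>v. (\<exists>r<CARD('n). v r \<noteq> 0) \<longrightarrow>
      (\<Sum>r<CARD('n). \<Sum>s<CARD('n). v r * (B0 r s + (\<Sum>j\<in>UNIV. u$j * B j r s)) * v s) > 0}"
    unfolding Sed_def neg_definite_def definite_iff_reindexed[OF h, where R = "\<lambda>t. t < 0"]
      entries flip neg_0_less_iff_less ..
  moreover have "\<forall>r s. B0 r s = B0 s r" "\<forall>j r s. B j r s = B j s r"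
    using sym by (simp_all add: B0_def B_def mat_def symmetric_component)
  ultimately show ?thesis
    unfolding spectrahedron_def by blast
qed

lemma zero_in_interior_Sed:
  fixes A :: "'n::finite \<Rightarrow> real^'n^'n"
  shows "0 \<in> interior (Sed A)"
proof -
  have "linear (\<lambda>lam. lin_comb lam A *v v)" for v
    unfolding lin_comb_mult_vec
    by (rule linearI) (simp_all add: scaleR_add_left sum.distrib scaleR_sum_right)
  then have "bilinear (\<lambda>lam v. lin_comb lam A *v v)"
    by (simp add: bilinear_def)
  then obtain B where B: "B > 0" "\<And>lam v. norm (lin_comb lam A *v v) \<le> B * norm lam * norm v"
    using bilinear_bounded_pos by blast
  have "ball 0 (1 / B) \<subseteq> Sed A"
  proof
    fix lam :: "real^'n" assume "lam \<in> ball 0 (1 / B)"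
    then have small: "B * norm lam < 1"
      using B(1) by (simp add: field_simps)
    have "v \<bullet> (lin_comb lam A *v v) < v \<bullet> v" if "v \<noteq> 0" for v
    proof -
      have "v \<bullet> (lin_comb lam A *v v) \<le> norm v * (B * norm lam * norm v)"
        using norm_cauchy_schwarz B(2) by (metis mult_left_mono norm_ge_zero order_trans)
      also have "\<dots> < norm v * norm v"
        using small that by (simp add: mult.assoc[symmetric])
      finally show ?thesis
        by (simp add: power2_norm_eq_inner[symmetric] power2_eq_square)
    qed
    then show "lam \<in> Sed A"
      by (simp add: Sed_def neg_definite_def matrix_vector_mult_diff_rdistrib inner_diff_right)
  qed
  with B(1) show ?thesis
    unfolding mem_interior by (metis divide_pos_pos zero_less_one)
qed

lemma quad_diff:
  assumes "transpose M = M"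
  shows "quad M b c z - quad M b c x = (z - x) \<bullet> (M *v (z - x)) + 2 * ((M *v x + b) \<bullet> (z - x))"
proof -
  have "x \<bullet> (M *v z) = z \<bullet> (M *v x)"
    by (metis assms dot_lmul_matrix transpose_matrix_vector inner_commute)
  then show ?thesis
    by (simp add: quad_def matrix_vector_mult_diff_distrib inner_diff_left inner_diff_right
        inner_add_left inner_commute algebra_simps)
qed

definition grad_comb :: "('i::finite \<Rightarrow> real^'n^'n) \<Rightarrow> ('i \<Rightarrow> real^'n) \<Rightarrow> real^'n \<Rightarrow> real^'i \<Rightarrow> real^'n"
  where "grad_comb A a x lam = (\<Sum>i\<in>UNIV. lam$i *\<^sub>R (a i + A i *v x))"

lemma realV_lagrangian_identity:
  assumes sym: "\<forall>i. transpose (A i) = A i" and "x \<in> realV A a \<alpha>" "z \<in> realV A a \<alpha>"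
  shows "(z - x) \<bullet> (lin_comb lam A *v (z - x)) + 2 * (grad_comb A a x lam \<bullet> (z - x)) = 0"
proof -
  have "0 = (\<Sum>i\<in>UNIV. lam$i * (quad (A i) (a i) (\<alpha> i) z - quad (A i) (a i) (\<alpha> i) x))"
    using assms(2,3) by (simp add: realV_def)
  also have "\<dots> = (\<Sum>i\<in>UNIV. lam$i * ((z - x) \<bullet> (A i *v (z - x))
      + 2 * ((A i *v x + a i) \<bullet> (z - x))))"
    using sym by (simp add: quad_diff)
  also have "\<dots> = (\<Sum>i\<in>UNIV. lam$i * ((z - x) \<bullet> (A i *v (z - x))))
      + 2 * (\<Sum>i\<in>UNIV. lam$i * ((A i *v x + a i) \<bullet> (z - x)))"
    by (simp only: sum_distrib_left sum.distrib[symmetric]) (simp add: algebra_simps)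
  also have "(\<Sum>i\<in>UNIV. lam$i * ((z - x) \<bullet> (A i *v (z - x)))) = (z - x) \<bullet> (lin_comb lam A *v (z - x))"
    by (simp add: lin_comb_mult_vec inner_sum_right)
  also have "(\<Sum>i\<in>UNIV. lam$i * ((A i *v x + a i) \<bullet> (z - x))) = grad_comb A a x lam \<bullet> (z - x)"
    by (simp add: grad_comb_def inner_sum_left add.commute)
  finally show ?thesis ..
qed

lemma Slin_strict_minimizer:
  assumes "\<forall>i. transpose (A i) = A i" "x \<in> realV A a \<alpha>" "z \<in> realV A a \<alpha>" "z \<noteq> x"
    and "lam \<in> Slin A"
  shows "grad_comb A a x lam \<bullet> x < grad_comb A a x lam \<bullet> z"
proof -
  have "(z - x) \<bullet> (lin_comb lam A *v (z - x)) < 0"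
    using assms(4,5) by (simp add: Slin_def neg_definite_def)
  with realV_lagrangian_identity[OF assms(1-3), of lam] show ?thesis
    by (simp add: inner_diff_right)
qed

lemma Sed_strict_nearest:
  assumes "\<forall>i. transpose (A i) = A i" "x \<in> realV A a \<alpha>" "z \<in> realV A a \<alpha>" "z \<noteq> x"
    and "lam \<in> Sed A"
  shows "dist (x - grad_comb A a x lam) x < dist (x - grad_comb A a x lam) z"
proof -
  define g d where "g = grad_comb A a x lam" and "d = z - x"
  have "d \<bullet> ((lin_comb lam A - mat 1) *v d) < 0"
    using assms(4,5) by (simp add: Sed_def neg_definite_def d_def)
  then have "d \<bullet> (lin_comb lam A *v d) < d \<bullet> d"
    by (simp add: matrix_vector_mult_diff_rdistrib inner_diff_right)
  moreover have "d \<bullet> (lin_comb lam A *v d) + 2 * (g \<bullet> d) = 0"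
    using realV_lagrangian_identity[OF assms(1-3)] by (simp add: g_def d_def)
  ultimately have "g \<bullet> g < (d + g) \<bullet> (d + g)"
    by (simp add: inner_add_left inner_add_right inner_commute)
  then show ?thesis
    by (simp add: dist_norm norm_lt g_def d_def algebra_simps)
qed

definition jac :: "('i \<Rightarrow> real^'n^'n) \<Rightarrow> ('i \<Rightarrow> real^'n) \<Rightarrow> real^'n \<Rightarrow> real^'n^'i"
  where "jac A a x = (\<chi> i j. (A i *v x)$j + a i $ j)"

lemma grad_comb_eq_jac: "grad_comb A a x lam = transpose (jac A a x) *v lam"
  by (simp add: vec_eq_iff grad_comb_def jac_def transpose_def matrix_vector_mult_def
      sum_component algebra_simps)

lemma det_jac_nonzero:
  assumes "complete_intersection A a \<alpha>" "x \<in> realV A a \<alpha>"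
  shows "det (jac A a x) \<noteq> 0"
proof -
  define z where "z = (\<chi> j. complex_of_real (x$j))"
  have "quadC (A i) (a i) (\<alpha> i) z = complex_of_real (quad (A i) (a i) (\<alpha> i) x)" for i
    by (simp add: quadC_def quad_def z_def inner_vec_def matrix_vector_mult_def of_real_sum
        sum_distrib_left algebra_simps)
  then have "z \<in> complexV A a \<alpha>"
    using assms(2) by (simp add: complexV_def realV_def)
  then have "det (jacC A a z) \<noteq> 0"
    using assms(1) by (simp add: complete_intersection_def)
  moreover have "jacC A a z = (\<chi> i j. complex_of_real (jac A a x $ i $ j))"
    by (simp add: jacC_def jac_def z_def matrix_vector_mult_def of_real_sum)
  ultimately show ?thesis
    by (simp add: det_of_real)
qed

lemma linear_grad_comb: "linear (grad_comb A a x)"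
  unfolding grad_comb_eq_jac[abs_def] by (rule matrix_vector_mul_linear)

lemma bij_grad_comb:
  assumes "complete_intersection A a \<alpha>" "x \<in> realV A a \<alpha>"
  shows "bij (grad_comb A a x)"
  unfolding grad_comb_eq_jac[abs_def] invertible_eq_bij[symmetric]
  by (intro transpose_invertible) (simp add: invertible_det_nz det_jac_nonzero[OF assms])

lemma Rlin_decomposition:
  fixes A :: "'n::finite \<Rightarrow> real^'n^'n"
  assumes sym: "\<forall>i. transpose (A i) = A i" and ci: "complete_intersection A a \<alpha>"
  shows "(\<forall>x\<in>realV A a \<alpha>. linear (grad_comb A a x) \<and> bij (grad_comb A a x) \<and>
            spectrahedral_cone (grad_comb A a x ` Slin A)) \<and>
         disjoint_family_on (\<lambda>x. grad_comb A a x ` Slin A) (realV A a \<alpha>) \<and>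
         Rlin A a \<alpha> = (\<Union>x\<in>realV A a \<alpha>. grad_comb A a x ` Slin A)"
proof (intro conjI ballI)
  fix x assume x: "x \<in> realV A a \<alpha>"
  show "linear (grad_comb A a x)"
    by (rule linear_grad_comb)
  show "bij (grad_comb A a x)"
    using ci x by (rule bij_grad_comb)
  show "spectrahedral_cone (grad_comb A a x ` Slin A)"
    using linear_grad_comb bij_grad_comb[OF ci x] spectrahedral_cone_Slin[OF sym]
    by (rule spectrahedral_cone_linear_image)
next
  show "disjoint_family_on (\<lambda>x. grad_comb A a x ` Slin A) (realV A a \<alpha>)"
    by (rule disjoint_family_on_strict_optimum[where \<phi> = "\<lambda>u x. u \<bullet> x"])
      (auto intro!: Slin_strict_minimizer[OF sym])
  show "Rlin A a \<alpha> = (\<Union>x\<in>realV A a \<alpha>. grad_comb A a x ` Slin A)"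
    unfolding Rlin_def grad_comb_def by blast
qed

lemma Red_decomposition:
  fixes A :: "'n::finite \<Rightarrow> real^'n^'n"
  assumes sym: "\<forall>i. transpose (A i) = A i" and ci: "complete_intersection A a \<alpha>"
  shows "(\<forall>x\<in>realV A a \<alpha>. linear (\<lambda>w. - grad_comb A a x w) \<and> bij (\<lambda>w. - grad_comb A a x w) \<and>
            spectrahedron ((\<lambda>w. - grad_comb A a x w + x) ` Sed A) \<and>
            interior ((\<lambda>w. - grad_comb A a x w + x) ` Sed A) \<noteq> {}) \<and>
         disjoint_family_on (\<lambda>x. (\<lambda>w. - grad_comb A a x w + x) ` Sed A) (realV A a \<alpha>) \<and>
         Red A a \<alpha> = (\<Union>x\<in>realV A a \<alpha>. (\<lambda>w. - grad_comb A a x w + x) ` Sed A)"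
proof (intro conjI ballI)
  fix x assume x: "x \<in> realV A a \<alpha>"
  show lin: "linear (\<lambda>w. - grad_comb A a x w)"
    using linear_grad_comb by (rule linear_compose_neg)
  show bij: "bij (\<lambda>w. - grad_comb A a x w)"
    using bij_comp[OF bij_grad_comb[OF ci x] bij_uminus] by (simp add: comp_def)
  show "spectrahedron ((\<lambda>w. - grad_comb A a x w + x) ` Sed A)"
    using lin bij spectrahedron_Sed[OF sym] by (rule spectrahedron_affine_image)
  show "interior ((\<lambda>w. - grad_comb A a x w + x) ` Sed A) \<noteq> {}"
    using zero_in_interior_Sed interior_injective_affine_image[OF lin bij_is_inj[OF bij]]
    by blast
next
  show "disjoint_family_on (\<lambda>x. (\<lambda>w. - grad_comb A a x w + x) ` Sed A) (realV A a \<alpha>)"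
    by (rule disjoint_family_on_strict_optimum[where \<phi> = dist])
      (auto intro!: Sed_strict_nearest[OF sym])
  show "Red A a \<alpha> = (\<Union>x\<in>realV A a \<alpha>. (\<lambda>w. - grad_comb A a x w + x) ` Sed A)"
    unfolding Red_def grad_comb_def by force
qed

theorem corollary4p3:
  fixes A :: "'n::finite \<Rightarrow> real^'n^'n" and a :: "'n \<Rightarrow> real^'n" and \<alpha> :: "'n \<Rightarrow> real"
    and k :: nat
  assumes sym: "\<forall>i. transpose (A i) = A i"
    and ci: "complete_intersection A a \<alpha>"
    and k: "finite (realV A a \<alpha>)" "card (realV A a \<alpha>) = k" "k \<le> 2 ^ CARD('n)"
  shows "(\<exists>L :: real^'n \<Rightarrow> real^'n \<Rightarrow> real^'n.
            (\<forall>x\<in>realV A a \<alpha>. linear (L x) \<and> bij (L x) \<and>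
                spectrahedral_cone (L x ` Slin A)) \<and>
            disjoint_family_on (\<lambda>x. L x ` Slin A) (realV A a \<alpha>) \<and>
            Rlin A a \<alpha> = (\<Union>x\<in>realV A a \<alpha>. L x ` Slin A))
       \<and> (\<exists>(M :: real^'n \<Rightarrow> real^'n \<Rightarrow> real^'n) (c :: real^'n \<Rightarrow> real^'n).
            (\<forall>x\<in>realV A a \<alpha>. linear (M x) \<and> bij (M x) \<and>
                spectrahedron ((\<lambda>w. M x w + c x) ` Sed A) \<and>
                interior ((\<lambda>w. M x w + c x) ` Sed A) \<noteq> {}) \<and>
            disjoint_family_on (\<lambda>x. (\<lambda>w. M x w + c x) ` Sed A) (realV A a \<alpha>) \<and>
            Red A a \<alpha> = (\<Union>x\<in>realV A a \<alpha>. (\<lambda>w. M x w + c x) ` Sed A))"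
  apply (rule conjI)
  subgoal by (rule exI[of _ "grad_comb A a"]) (fact Rlin_decomposition[OF sym ci])
  subgoal by (intro exI[of _ "\<lambda>x w. - grad_comb A a x w"] exI[of _ "\<lambda>x. x"])
      (fact Red_decomposition[OF sym ci])
  done

end
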